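(* Let $a>0$, let $q$ be a continuous complex-valued function on $[-a,a]$, and let $K(x,t)$ be the solution of the Goursat problem $\big(\partial_x^{2}-q(x)\big)K=\partial_t^{2}K$, $K(x,x)=\frac12\int_0^x q(s)\,ds$, $K(x,-x)=0$. For $h\in\mathbb{C}$ define $$\mathbf{K}(x,t;h)=\frac{h}{2}+K(x,t)+\frac{h}{2}\int_{t}^{x}\big(K(x,s)-K(x,-s)\big)\,ds.$$ Then for all $h,h_1\in\mathbb{C}$, $$\mathbf{K}(x,t;h)=\frac{h-h_1}{2}+\mathbf{K}(x,t;h_1)+\frac{h-h_1}{2}\int_t^x\big(\mathbf{K}(x,s;h_1)-\mathbf{K}(x,-s;h_1)\big)\,ds.$$ *)

theory Defs
  imports "HOL-Analysis.Analysis"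
begin

definition goursat_dom :: "real \<Rightarrow> (real \<times> real) set" where
  "goursat_dom a = {(x, t). \<bar>t\<bar> \<le> \<bar>x\<bar> \<and> \<bar>x\<bar> \<le> a}"

definition goursat_int :: "real \<Rightarrow> (real \<times> real) set" where
  "goursat_int a = {(x, t). \<bar>t\<bar> < \<bar>x\<bar> \<and> \<bar>x\<bar> < a}"

definition test_fun ::
  "(real \<times> real) set \<Rightarrow> (real \<Rightarrow> real \<Rightarrow> real) \<Rightarrow> (real \<Rightarrow> real \<Rightarrow> real) \<Rightarrow>
   (real \<Rightarrow> real \<Rightarrow> real) \<Rightarrow> (real \<Rightarrow> real \<Rightarrow> real) \<Rightarrow> (real \<Rightarrow> real \<Rightarrow> real) \<Rightarrow> bool" where
  "test_fun U \<phi> \<phi>x \<phi>xx \<phi>t \<phi>tt \<longleftrightarrow>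
     (\<forall>x t. ((\<lambda>y. \<phi> y t) has_real_derivative \<phi>x x t) (at x) \<and>
            ((\<lambda>y. \<phi>x y t) has_real_derivative \<phi>xx x t) (at x) \<and>
            ((\<lambda>s. \<phi> x s) has_real_derivative \<phi>t x t) (at t) \<and>
            ((\<lambda>s. \<phi>t x s) has_real_derivative \<phi>tt x t) (at t)) \<and>
     continuous_on UNIV (\<lambda>(x, t). \<phi> x t) \<and>
     continuous_on UNIV (\<lambda>(x, t). \<phi>x x t) \<and>
     continuous_on UNIV (\<lambda>(x, t). \<phi>t x t) \<and>
     continuous_on UNIV (\<lambda>(x, t). \<phi>xx x t) \<and>
     continuous_on UNIV (\<lambda>(x, t). \<phi>tt x t) \<and>
     compact (closure {(x, t). \<phi> x t \<noteq> 0}) \<and>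
     closure {(x, t). \<phi> x t \<noteq> 0} \<subseteq> U"

text \<open>K is the (generalized, continuous) solution of the Goursat problem
  (d_x^2 - q(x)) K = d_t^2 K,  K(x,x) = 1/2 int_0^x q,  K(x,-x) = 0,
  on |t| <= |x| <= a; the equation is understood in the sense of distributions
  on the interior of the domain (for merely continuous q, K need not be C^2).\<close>
definition goursat_solution ::
  "real \<Rightarrow> (real \<Rightarrow> complex) \<Rightarrow> (real \<Rightarrow> real \<Rightarrow> complex) \<Rightarrow> bool" where
  "goursat_solution a q K \<longleftrightarrow>
     continuous_on (goursat_dom a) (\<lambda>(x, t). K x t) \<and>
     (\<forall>x\<in>{-a..a}. K x x = (LBINT s=0..x. q s) / 2 \<and> K x (-x) = 0) \<and>
     (\<forall>\<phi> \<phi>x \<phi>xx \<phi>t \<phi>tt. test_fun (goursat_int a) \<phi> \<phi>x \<phi>xx \<phi>t \<phi>tt \<longrightarrow>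
        (LINT x|lborel. LINT t|lborel.
           K x t * complex_of_real (\<phi>xx x t - \<phi>tt x t) - q x * K x t * complex_of_real (\<phi> x t)) = 0)"

text \<open>The kernel bold-K(x,t;h); the integral is oriented (from t to x).\<close>
definition bigK :: "(real \<Rightarrow> real \<Rightarrow> complex) \<Rightarrow> real \<Rightarrow> real \<Rightarrow> complex \<Rightarrow> complex" where
  "bigK K x t h = h / 2 + K x t + h / 2 * (LBINT s=t..x. K x s - K x (-s))"

end

theory Submission
  imports Defs
begin

(* For fixed x the kernel bold-K(x,t;h) is affine in h, with slope (1 + int_t^x D)/2 where
   D(s) = K(x,s) - K(x,-s). Since D is odd, int_s^x D = int_{-s}^x D, so the integrand
   bold-K(x,s;h1) - bold-K(x,-s;h1) of the identity collapses to D(s), whatever h1 is,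
   and the identity reduces to the affine dependence on h. *)

lemma interval_integral_odd_eq_0:
  fixes f :: "real \<Rightarrow> 'a::{banach, second_countable_topology}"
  assumes "\<And>r. f (-r) = - f r"
  shows "(LBINT r=ereal s..ereal (-s). f r) = 0"
proof -
  have "(LBINT r=ereal s..ereal (-s). f r) = (LBINT r=ereal s..ereal (-s). - f r)"
    using interval_integral_reflect[where f=f and a="ereal s" and b="ereal (-s)"] assms by simp
  also have "\<dots> = - (LBINT r=ereal s..ereal (-s). f r)"
    by (rule interval_lebesgue_integral_uminus)
  finally have "2 *\<^sub>R (LBINT r=ereal s..ereal (-s). f r) = 0"
    by (simp add: scaleR_2 eq_neg_iff_add_eq_0)
  then show ?thesis by simp
qed

lemma interval_integrable_continuous_on_between:
  fixes f :: "real \<Rightarrow> 'a::{banach, second_countable_topology}"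
  assumes "continuous_on {l..r} f" "u \<in> {l..r}" "v \<in> {l..r}"
  shows "interval_lebesgue_integrable lborel (ereal u) (ereal v) f"
proof -
  have "interval_lebesgue_integrable lborel (ereal (min u v)) (ereal (max u v)) f"
    using assms by (intro interval_integrable_continuous_on) (auto elim!: continuous_on_subset)
  then show ?thesis
    by (cases "u \<le> v") (auto simp: min_def max_def interval_integrable_endpoints_reverse)
qed

lemma interval_integral_odd_reflect_lower:
  fixes f :: "real \<Rightarrow> 'a::{banach, second_countable_topology}"
  assumes odd: "\<And>r. f (-r) = - f r"
    and cont: "continuous_on {-c..c} f" and "\<bar>s\<bar> \<le> c" "\<bar>x\<bar> \<le> c"
  shows "(LBINT r=ereal s..ereal x. f r) = (LBINT r=ereal (-s)..ereal x. f r)"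
proof -
  have "min (ereal s) (min (ereal (-s)) (ereal x)) = ereal (min s (min (-s) x))"
       "max (ereal s) (max (ereal (-s)) (ereal x)) = ereal (max s (max (-s) x))"
    by (simp_all add: min_def max_def)
  moreover have "interval_lebesgue_integrable lborel
      (ereal (min s (min (-s) x))) (ereal (max s (max (-s) x))) f"
    using assms by (intro interval_integrable_continuous_on_between[OF cont]) auto
  ultimately have "(LBINT r=ereal s..ereal (-s). f r) + (LBINT r=ereal (-s)..ereal x. f r)
      = (LBINT r=ereal s..ereal x. f r)"
    by (intro interval_integral_sum) simp
  then show ?thesis using interval_integral_odd_eq_0[of f s, OF odd] by simp
qed

lemma bigK_affine:
  "bigK K x t h = bigK K x t h1 + (h - h1) / 2 * (1 + (LBINT s=t..x. K x s - K x (-s)))"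
  unfolding bigK_def by (simp add: field_simps)

lemma bigK_odd_part:
  assumes cont: "continuous_on {-\<bar>x\<bar>..\<bar>x\<bar>} (K x)" and "\<bar>s\<bar> \<le> \<bar>x\<bar>"
  shows "bigK K x s h - bigK K x (-s) h = K x s - K x (-s)"
proof -
  have "continuous_on {-\<bar>x\<bar>..\<bar>x\<bar>} (\<lambda>r. K x r - K x (-r))"
    by (intro continuous_intros cont continuous_on_compose2[OF cont]) auto
  then have "(LBINT r=ereal s..ereal x. K x r - K x (-r))
      = (LBINT r=ereal (-s)..ereal x. K x r - K x (-r))"
    using assms by (intro interval_integral_odd_reflect_lower) auto
  then show ?thesis unfolding bigK_def by simp
qed

lemma goursat_solution_continuous_slice:
  assumes "goursat_solution a q K" "\<bar>x\<bar> \<le> a"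
  shows "continuous_on {-\<bar>x\<bar>..\<bar>x\<bar>} (K x)"
proof -
  have "continuous_on (goursat_dom a) (\<lambda>(x, t). K x t)"
    using assms(1) by (simp add: goursat_solution_def)
  then have "continuous_on {-\<bar>x\<bar>..\<bar>x\<bar>} ((\<lambda>(x, t). K x t) \<circ> Pair x)"
    using assms(2)
    by (intro continuous_on_compose continuous_intros)
      (auto elim!: continuous_on_subset simp: goursat_dom_def)
  then show ?thesis by (simp add: o_def)
qed

theorem mainTheorem3:
  fixes a :: real and q :: "real \<Rightarrow> complex" and K :: "real \<Rightarrow> real \<Rightarrow> complex"
    and h h1 :: complex and x t :: real
  assumes "a > 0"
    and "continuous_on {-a..a} q"
    and "goursat_solution a q K"
    and "(x, t) \<in> goursat_dom a"
  shows "bigK K x t h = (h - h1) / 2 + bigK K x t h1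
           + (h - h1) / 2 * (LBINT s=t..x. bigK K x s h1 - bigK K x (-s) h1)"
proof -
  have t: "\<bar>t\<bar> \<le> \<bar>x\<bar>" and x: "\<bar>x\<bar> \<le> a"
    using assms(4) by (auto simp: goursat_dom_def)
  have cont: "continuous_on {-\<bar>x\<bar>..\<bar>x\<bar>} (K x)"
    using goursat_solution_continuous_slice[OF assms(3) x] .
  have "(LBINT s=t..x. bigK K x s h1 - bigK K x (-s) h1) = (LBINT s=t..x. K x s - K x (-s))"
  proof (rule interval_integral_cong)
    fix s assume "s \<in> einterval (min (ereal t) (ereal x)) (max (ereal t) (ereal x))"
    then have "\<bar>s\<bar> \<le> \<bar>x\<bar>"
      using t by (auto simp: einterval_iff min_def max_def split: if_splits)
    then show "bigK K x s h1 - bigK K x (-s) h1 = K x s - K x (-s)"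
      by (rule bigK_odd_part[where K=K and x=x, OF cont])
  qed
  then show ?thesis
    using bigK_affine[of K x t h h1] by (simp add: algebra_simps)
qed

end
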